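(* For $\theta>0$ and $\sigma>0$, \[\rho_2(\theta,\sigma^2):=\int_{\mathbb{R}^3}\mathbb{E}\,\psi\Big(\theta\int_0^1\frac{ds}{|x+X_0(s)|^2}\Big)dx\le\frac83\pi^{3/2}\theta^{3/2}.\]
   Context: $X_0=\sigma W$ where $W$ is a standard $3$-dimensional Brownian motion from $0$; $\mathbb{E}$ is expectation over $X_0$. $\psi(a)=e^{-a}-1+a$ for $a\ge0$. *)

theory Defs
  imports "HOL-Probability.Probability"
begin

definition psi :: "real \<Rightarrow> real" where
  "psi a = exp (- a) - 1 + a"

text \<open>Extension of psi to [0, infinity]: psi(infinity) = infinity (psi(a) -> infinity as a -> infinity).\<close>
definition psi_ext :: "ennreal \<Rightarrow> ennreal" where
  "psi_ext a = (if a = \<top> then \<top> else ennreal (psi (enn2real a)))"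

definition std_BM3 :: "'a measure \<Rightarrow> (real \<Rightarrow> 'a \<Rightarrow> real^3) \<Rightarrow> bool" where
  "std_BM3 M W \<longleftrightarrow>
     prob_space M \<and>
     (\<forall>t. W t \<in> borel_measurable M) \<and>
     (\<forall>\<omega>\<in>space M. W 0 \<omega> = 0 \<and> continuous_on {0..} (\<lambda>t. W t \<omega>)) \<and>
     (\<forall>(ts :: nat \<Rightarrow> real) n. 0 \<le> ts 0 \<longrightarrow> (\<forall>i<n. ts i < ts (Suc i)) \<longrightarrow>
        prob_space.indep_vars M (\<lambda>_. borel)
          (\<lambda>(k, i) \<omega>. (W (ts (Suc i)) \<omega> - W (ts i) \<omega>) $ k) (UNIV \<times> {..<n})) \<and>
     (\<forall>s t k. 0 \<le> s \<longrightarrow> s < t \<longrightarrow>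
        distributed M lborel (\<lambda>\<omega>. (W t \<omega> - W s \<omega>) $ k)
          (\<lambda>x. ennreal (normal_density 0 (sqrt (t - s)) x)))"

end

theory Submission
  imports Defs
begin

text \<open>Since \<open>psi\<close> is convex, Jensen's inequality in the time variable moves \<open>psi\<close> inside the
  integral over \<open>s \<in> [0,1]\<close>. After exchanging the order of integration, each fixed path point
  \<open>\<sigma> W s \<omega>\<close> only translates the space integral, which therefore equals
  \<open>\<integral> psi (\<theta> / |x|\<^sup>2) dx\<close>. Writing \<open>psi a = \<integral>\<^sub>0\<^sup>a (1 - e\<^sup>-\<^sup>u) du\<close> turns this into
  \<open>\<integral>\<^sub>0\<^sup>\<infinity> (1 - e\<^sup>-\<^sup>u) vol {x. u |x|\<^sup>2 \<le> \<theta>} du = 4/3 \<pi> \<theta>\<^sup>3\<^sup>/\<^sup>2 \<integral>\<^sub>0\<^sup>\<infinity> (1 - e\<^sup>-\<^sup>u) u\<^sup>-\<^sup>3\<^sup>/\<^sup>2 du\<close>,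
  and the last integral is \<open>2 \<Gamma>(1/2) = 2 \<surd>\<pi>\<close>.\<close>

lemma psi_nonneg: "0 \<le> psi a"
  unfolding psi_def using exp_ge_add_one_self[of "-a"] by simp

lemma psi_le_self: "0 \<le> a \<Longrightarrow> psi a \<le> a"
  unfolding psi_def by simp

lemma convex_on_psi: "convex_on UNIV psi"
proof (rule convex_on_realI[where f'="\<lambda>a. 1 - exp (-a)"])
  show "(psi has_real_derivative 1 - exp (- x)) (at x)" for x
    unfolding psi_def[abs_def] by (auto intro!: derivative_eq_intros)
qed auto

lemma borel_measurable_psi[measurable]: "psi \<in> borel_measurable borel"
  unfolding psi_def[abs_def] by measurable

lemma borel_measurable_psi_ext[measurable]: "psi_ext \<in> borel_measurable borel"
  unfolding psi_ext_def[abs_def] by measurable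

lemma psi_ext_ennreal: "0 \<le> a \<Longrightarrow> psi_ext (ennreal a) = ennreal (psi a)"
  by (simp add: psi_ext_def)

lemma le_psi_ext_add_one: "a \<le> psi_ext a + 1"
proof (cases a)
  case (real r)
  then have "ennreal r \<le> ennreal (psi r + 1)"
    by (intro ennreal_leI) (simp add: psi_def)
  with real show ?thesis by (simp add: psi_ext_def psi_nonneg)
qed (simp add: psi_ext_def)

lemma (in prob_space) psi_ext_nn_integral_le:
  assumes q[measurable]: "q \<in> borel_measurable M"
  shows "psi_ext (\<integral>\<^sup>+s. q s \<partial>M) \<le> (\<integral>\<^sup>+s. psi_ext (q s) \<partial>M)"
proof (cases "(\<integral>\<^sup>+s. q s \<partial>M) = \<top>")
  case True
  have "(\<integral>\<^sup>+s. q s \<partial>M) \<le> (\<integral>\<^sup>+s. psi_ext (q s) + 1 \<partial>M)"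
    by (intro nn_integral_mono le_psi_ext_add_one)
  also have "\<dots> = (\<integral>\<^sup>+s. psi_ext (q s) \<partial>M) + 1"
    by (subst nn_integral_add) (auto simp: emeasure_space_1)
  finally show ?thesis using True by (auto simp: top_unique)
next
  case False
  define r where "r s = enn2real (q s)" for s
  have [measurable]: "r \<in> borel_measurable M"
    unfolding r_def[abs_def] by measurable
  have r_nonneg: "0 \<le> r s" for s unfolding r_def by simp
  have "AE s in M. q s \<noteq> \<infinity>"
    using False by (intro nn_integral_PInf_AE) simp_all
  then have q_eq_r: "AE s in M. q s = ennreal (r s)"
    by eventually_elim (auto simp: r_def less_top)
  then have int_q: "(\<integral>\<^sup>+s. q s \<partial>M) = (\<integral>\<^sup>+s. ennreal (r s) \<partial>M)"
    by (rule nn_integral_cong_AE)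
  have r_int: "integrable M r"
    by (rule integrableI_nonneg) (use False int_q r_nonneg in \<open>auto simp: top.not_eq_extremum\<close>)
  have psi_r_int: "integrable M (\<lambda>s. psi (r s))"
    by (rule Bochner_Integration.integrable_bound[OF r_int])
       (auto simp: r_def psi_nonneg psi_le_self)
  have "psi (expectation r) \<le> expectation (\<lambda>s. psi (r s))"
    using r_int psi_r_int convex_on_psi by (intro jensens_inequality[where I=UNIV]) auto
  moreover have "(\<integral>\<^sup>+s. q s \<partial>M) = ennreal (expectation r)"
    unfolding int_q by (rule nn_integral_eq_integral[OF r_int]) (simp add: r_nonneg)
  moreover have "(\<integral>\<^sup>+s. psi_ext (q s) \<partial>M) = (\<integral>\<^sup>+s. ennreal (psi (r s)) \<partial>M)"
    using q_eq_r by (intro nn_integral_cong_AE) (auto elim!: eventually_mono simp: psi_ext_ennreal r_nonneg)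
  moreover have "\<dots> = ennreal (expectation (\<lambda>s. psi (r s)))"
    by (rule nn_integral_eq_integral[OF psi_r_int]) (simp add: psi_nonneg)
  moreover have "0 \<le> expectation r"
    by (simp add: r_nonneg)
  ultimately show ?thesis by (simp add: psi_ext_ennreal ennreal_leI)
qed

lemma psi_ext_nn_integral_unit_interval_le:
  fixes q :: "real \<Rightarrow> ennreal"
  assumes [measurable]: "q \<in> borel_measurable lborel"
  shows "psi_ext (\<integral>\<^sup>+s. q s * indicator {0..1} s \<partial>lborel)
    \<le> (\<integral>\<^sup>+s. psi_ext (q s) * indicator {0..1} s \<partial>lborel)"
proof -
  interpret U: prob_space "restrict_space lborel {0..1::real}"
    by (rule prob_space_restrict_space) auto
  have "q \<in> borel_measurable (restrict_space lborel {0..1})"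
    by (rule measurable_restrict_space1) simp
  from U.psi_ext_nn_integral_le[OF this] show ?thesis
    by (simp add: nn_integral_restrict_space)
qed

lemma nn_integral_exp_minus_Icc:
  "0 \<le> u \<Longrightarrow> (\<integral>\<^sup>+v. ennreal (exp (-v)) * indicator {0..u} v \<partial>lborel) = ennreal (1 - exp (-u))"
  by (subst nn_integral_FTC_Icc[where F="\<lambda>v. - exp (-v)"]) (auto intro!: derivative_eq_intros)

lemma psi_eq_nn_integral:
  "0 \<le> a \<Longrightarrow> ennreal (psi a) = (\<integral>\<^sup>+u. ennreal (1 - exp (-u)) * indicator {0..a} u \<partial>lborel)"
  by (subst nn_integral_FTC_Icc[where F="\<lambda>u. u + exp (-u)"])
     (auto intro!: derivative_eq_intros simp: psi_def algebra_simps)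

lemma nn_integral_powr_minus_three_halves_atLeast:
  assumes "0 < v"
  shows "(\<integral>\<^sup>+u. ennreal (u powr (-3/2)) * indicator {v..} u \<partial>lborel) = ennreal (2 * v powr (-1/2))"
proof -
  have "(\<integral>\<^sup>+u. ennreal (u powr (-3/2)) * indicator {v..} u \<partial>lborel) = 0 - (- 2 * v powr (-1/2))"
  proof (rule nn_integral_FTC_atLeast[where F="\<lambda>u. - 2 * u powr (-1/2)"])
    fix x assume "v \<le> x"
    with assms have "((\<lambda>u. - 2 * u powr (-1/2)) has_real_derivative (-2) * ((-1/2) * x powr (-1/2 - 1))) (at x)"
      by (intro DERIV_cmult has_real_derivative_powr) auto
    then show "((\<lambda>u. - 2 * u powr (-1/2)) has_real_derivative x powr (-3/2)) (at x)"
      by simp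
  next
    show "((\<lambda>u::real. - 2 * u powr (-1/2)) \<longlongrightarrow> 0) at_top"
      using tendsto_mult_right_zero[OF tendsto_neg_powr[of "-1/2" "\<lambda>x. x" at_top], of "-2"]
      by (simp add: filterlim_ident)
  qed auto
  then show ?thesis by simp
qed

lemma nn_integral_Gamma_one_half:
  "(\<integral>\<^sup>+v. ennreal (v powr (-1/2) / exp v) * indicator {0..} v \<partial>lborel) = ennreal (sqrt pi)"
proof -
  have "((\<lambda>t::real. t powr (1/2 - 1) / exp t) has_integral Gamma (1/2)) {0..}"
    by (rule Gamma_integral_real) simp
  then have "((\<lambda>t::real. if t \<in> {0..} then t powr (-1/2) / exp t else 0) has_integral sqrt pi) UNIV"
    unfolding has_integral_restrict_UNIV by (simp add: Gamma_one_half_real)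
  then have "integral\<^sup>N lborel (\<lambda>t::real. if t \<in> {0..} then t powr (-1/2) / exp t else 0) = sqrt pi"
    by (rule nn_integral_has_integral_lborel[rotated 2]) auto
  then show ?thesis
    by (subst (asm) nn_integral_cong[where v="\<lambda>v. ennreal (v powr (-1/2) / exp v) * indicator {0..} v"])
       (auto split: split_indicator)
qed

text \<open>Write \<open>1 - e\<^sup>-\<^sup>u\<close> as \<open>\<integral>\<^sub>0\<^sup>u e\<^sup>-\<^sup>v dv\<close> and integrate over \<open>u\<close> first.\<close>
lemma nn_integral_one_minus_exp_powr_minus_three_halves:
  "(\<integral>\<^sup>+u. ennreal ((1 - exp (-u)) * u powr (-3/2)) * indicator {0<..} u \<partial>lborel) = ennreal (2 * sqrt pi)"
proof -
  let ?f = "\<lambda>u v::real. ennreal (exp (-v)) * indicator {0..u} v * (ennreal (u powr (-3/2)) * indicator {0<..} u)"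
  have "(\<integral>\<^sup>+u. ennreal ((1 - exp (-u)) * u powr (-3/2)) * indicator {0<..} u \<partial>lborel)
      = (\<integral>\<^sup>+u. (\<integral>\<^sup>+v. ?f u v \<partial>lborel) \<partial>lborel)"
  proof (intro nn_integral_cong)
    fix u :: real
    show "ennreal ((1 - exp (-u)) * u powr (-3/2)) * indicator {0<..} u = (\<integral>\<^sup>+v. ?f u v \<partial>lborel)"
    proof (cases "0 < u")
      case True
      have "(\<integral>\<^sup>+v. ?f u v \<partial>lborel)
          = (\<integral>\<^sup>+v. ennreal (exp (-v)) * indicator {0..u} v \<partial>lborel) * (ennreal (u powr (-3/2)) * indicator {0<..} u)"
        by (rule nn_integral_multc) simp
      with True show ?thesis
        by (simp add: nn_integral_exp_minus_Icc ennreal_mult[symmetric] mult.assoc)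
    qed simp
  qed
  also have "\<dots> = (\<integral>\<^sup>+v. (\<integral>\<^sup>+u. ?f u v \<partial>lborel) \<partial>lborel)"
    by (rule lborel_pair.Fubini'[symmetric]) (simp add: indicator_def)
  also have "\<dots> = (\<integral>\<^sup>+v. 2 * (ennreal (v powr (-1/2) / exp v) * indicator {0..} v) \<partial>lborel)"
  proof (rule nn_integral_cong_AE)
    show "AE v in lborel. (\<integral>\<^sup>+u. ?f u v \<partial>lborel) = 2 * (ennreal (v powr (-1/2) / exp v) * indicator {0..} v)"
      using AE_lborel_singleton[of 0]
    proof eventually_elim
      case (elim v)
      show ?case
      proof (cases "0 < v")
        case True
        have "(\<integral>\<^sup>+u. ?f u v \<partial>lborel) = (\<integral>\<^sup>+u. ennreal (exp (-v)) * (ennreal (u powr (-3/2)) * indicator {v..} u) \<partial>lborel)"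
          using True by (intro nn_integral_cong) (auto simp: indicator_def)
        also have "\<dots> = ennreal (exp (-v)) * (\<integral>\<^sup>+u. ennreal (u powr (-3/2)) * indicator {v..} u \<partial>lborel)"
          by (rule nn_integral_cmult) simp
        also have "\<dots> = ennreal (exp (-v)) * ennreal (2 * v powr (-1/2))"
          by (simp only: nn_integral_powr_minus_three_halves_atLeast[OF True])
        also have "\<dots> = ennreal 2 * ennreal (v powr (-1/2) / exp v)"
          by (simp add: ennreal_mult[symmetric] exp_minus field_simps del: ennreal_numeral)
        also have "\<dots> = 2 * (ennreal (v powr (-1/2) / exp v) * indicator {0..} v)"
          using True by simp
        finally show ?thesis .
      qed (use elim in \<open>simp add: indicator_def\<close>)
    qed
  qed
  also have "\<dots> = ennreal (2 * sqrt pi)"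
    by (simp add: nn_integral_cmult nn_integral_Gamma_one_half[simplified] ennreal_mult)
  finally show ?thesis .
qed

lemma emeasure_lborel_norm_sq_le:
  assumes "0 < u" and "0 < \<theta>"
  shows "emeasure lborel {x::real^3. u * (norm x)\<^sup>2 \<le> \<theta>}
    = ennreal (4/3 * pi * \<theta> powr (3/2)) * ennreal (u powr (-3/2))"
proof -
  have "u * (norm x)\<^sup>2 \<le> \<theta> \<longleftrightarrow> norm x \<le> sqrt (\<theta>/u)" for x :: "real^3"
  proof -
    have "norm x \<le> sqrt (\<theta>/u) \<longleftrightarrow> sqrt ((norm x)\<^sup>2) \<le> sqrt (\<theta>/u)" by simp
    also have "\<dots> \<longleftrightarrow> (norm x)\<^sup>2 \<le> \<theta>/u" by (rule real_sqrt_le_iff)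
    also have "\<dots> \<longleftrightarrow> u * (norm x)\<^sup>2 \<le> \<theta>"
      using assms by (simp add: pos_le_divide_eq mult.commute)
    finally show ?thesis by simp
  qed
  then have ball: "{x::real^3. u * (norm x)\<^sup>2 \<le> \<theta>} = cball 0 (sqrt (\<theta>/u))"
    by (auto simp: cball_def dist_norm)
  have "sqrt (\<theta>/u) ^ 3 = ((\<theta>/u) powr (1/2)) ^ 3"
    using assms by (simp add: powr_half_sqrt)
  also have "\<dots> = (\<theta>/u) powr (of_nat 3 * (1/2))"
    using assms by (intro powr_power) simp
  also have "\<dots> = \<theta> powr (3/2) * u powr (-3/2)"
    by (simp add: powr_divide powr_minus_divide)
  finally have "sqrt (\<theta>/u) ^ 3 = \<theta> powr (3/2) * u powr (-3/2)" .
  with assms show ?thesis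
    by (simp add: ball emeasure_cball unit_ball_vol_3 ennreal_mult[symmetric] mult_ac)
qed

lemma psi_ext_inverse_norm_sq_eq_nn_integral:
  fixes x :: "'a::real_normed_vector"
  assumes "x \<noteq> 0" and "0 < \<theta>"
  shows "psi_ext (ennreal \<theta> * inverse (ennreal ((norm x)\<^sup>2)))
    = (\<integral>\<^sup>+u. ennreal (1 - exp (-u)) * indicator {u. 0 \<le> u \<and> u * (norm x)\<^sup>2 \<le> \<theta>} u \<partial>lborel)"
proof -
  have "ennreal \<theta> * inverse (ennreal ((norm x)\<^sup>2)) = ennreal (\<theta> / (norm x)\<^sup>2)"
    using assms by (simp add: inverse_ennreal ennreal_mult[symmetric] divide_inverse)
  then have "psi_ext (ennreal \<theta> * inverse (ennreal ((norm x)\<^sup>2)))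
      = (\<integral>\<^sup>+u. ennreal (1 - exp (-u)) * indicator {0..\<theta> / (norm x)\<^sup>2} u \<partial>lborel)"
    using assms by (simp add: psi_ext_ennreal psi_eq_nn_integral)
  also have "\<dots> = (\<integral>\<^sup>+u. ennreal (1 - exp (-u)) * indicator {u. 0 \<le> u \<and> u * (norm x)\<^sup>2 \<le> \<theta>} u \<partial>lborel)"
    using assms by (intro nn_integral_cong) (auto simp: le_divide_eq mult.commute split: split_indicator)
  finally show ?thesis .
qed

lemma nn_integral_psi_ext_inverse_norm_sq:
  assumes "0 < \<theta>"
  shows "(\<integral>\<^sup>+x. psi_ext (ennreal \<theta> * inverse (ennreal ((norm (x::real^3))\<^sup>2))) \<partial>lborel)
    = ennreal (8/3 * pi powr (3/2) * \<theta> powr (3/2))"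
proof -
  define S where "S = {p::(real^3) \<times> real. 0 \<le> snd p \<and> snd p * (norm (fst p))\<^sup>2 \<le> \<theta>}"
  have "S = {p \<in> space (lborel \<Otimes>\<^sub>M lborel). 0 \<le> snd p \<and> snd p * (norm (fst p))\<^sup>2 \<le> \<theta>}"
    by (simp add: S_def space_pair_measure)
  also have "\<dots> \<in> sets (lborel \<Otimes>\<^sub>M lborel)"
    by measurable
  finally have [measurable]: "S \<in> sets (lborel \<Otimes>\<^sub>M lborel)" .
  define g where "g x u = ennreal (1 - exp (-u)) * indicator S (x, u)" for x :: "real^3" and u
  have "AE x in lborel. psi_ext (ennreal \<theta> * inverse (ennreal ((norm x)\<^sup>2))) = (\<integral>\<^sup>+u. g x u \<partial>lborel)"
    using AE_lborel_singleton[of 0]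
    by eventually_elim (simp add: psi_ext_inverse_norm_sq_eq_nn_integral assms g_def S_def indicator_def)
  then have "(\<integral>\<^sup>+x. psi_ext (ennreal \<theta> * inverse (ennreal ((norm (x::real^3))\<^sup>2))) \<partial>lborel)
      = (\<integral>\<^sup>+x. (\<integral>\<^sup>+u. g x u \<partial>lborel) \<partial>lborel)"
    by (rule nn_integral_cong_AE)
  also have "\<dots> = (\<integral>\<^sup>+u. (\<integral>\<^sup>+x. g x u \<partial>lborel) \<partial>lborel)"
    by (rule lborel_pair.Fubini'[symmetric]) (simp add: g_def)
  also have "\<dots> = (\<integral>\<^sup>+u. ennreal (4/3 * pi * \<theta> powr (3/2))
      * (ennreal ((1 - exp (-u)) * u powr (-3/2)) * indicator {0<..} u) \<partial>lborel)"
  proof (intro nn_integral_cong)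
    fix u :: real
    consider "u < 0" | "u = 0" | "0 < u" by linarith
    then show "(\<integral>\<^sup>+x. g x u \<partial>lborel) = ennreal (4/3 * pi * \<theta> powr (3/2))
      * (ennreal ((1 - exp (-u)) * u powr (-3/2)) * indicator {0<..} u)"
    proof cases
      case 1
      then show ?thesis by (simp add: g_def S_def indicator_def)
    next
      case 2
      then show ?thesis by (simp add: g_def)
    next
      case 3
      then have "(\<integral>\<^sup>+x. g x u \<partial>lborel)
          = ennreal (1 - exp (-u)) * emeasure lborel {x::real^3. u * (norm x)\<^sup>2 \<le> \<theta>}"
        by (simp add: g_def S_def indicator_def nn_integral_cmult_indicator[symmetric])
      with 3 show ?thesis
        using assms by (simp add: emeasure_lborel_norm_sq_le ennreal_mult[symmetric] mult_ac)
    qed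
  qed
  also have "\<dots> = ennreal (4/3 * pi * \<theta> powr (3/2)) * ennreal (2 * sqrt pi)"
    by (simp add: nn_integral_cmult nn_integral_one_minus_exp_powr_minus_three_halves[simplified])
  also have "\<dots> = ennreal (8/3 * pi powr (3/2) * \<theta> powr (3/2))"
    using assms by (simp add: ennreal_mult[symmetric] powr_add[of pi 1 "1/2", simplified] powr_half_sqrt)
  finally show ?thesis .
qed

lemma nn_integral_lborel_add_right:
  fixes f :: "'a::euclidean_space \<Rightarrow> ennreal"
  assumes "f \<in> borel_measurable borel"
  shows "(\<integral>\<^sup>+x. f (x + c) \<partial>lborel) = (\<integral>\<^sup>+x. f x \<partial>lborel)"
proof -
  have "(\<integral>\<^sup>+x. f x \<partial>lborel) = (\<integral>\<^sup>+x. f x \<partial>distr lborel borel ((+) c))"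
    by (simp add: lborel_distr_plus)
  also have "\<dots> = (\<integral>\<^sup>+x. f (c + x) \<partial>lborel)"
    using assms by (simp add: nn_integral_distr)
  finally show ?thesis by (simp add: add.commute)
qed

lemma borel_measurable_continuous_process:
  fixes W :: "real \<Rightarrow> 'a \<Rightarrow> 'b::metric_space"
  assumes W_meas: "\<And>t. W t \<in> borel_measurable M"
    and W_cont: "\<And>\<omega>. \<omega> \<in> space M \<Longrightarrow> continuous_on {0..} (\<lambda>t. W t \<omega>)"
  shows "(\<lambda>p. W (max 0 (snd p)) (fst p)) \<in> borel_measurable (M \<Otimes>\<^sub>M lborel)"
proof (rule borel_measurable_LIMSEQ_metric)
  \<comment> \<open>Approximate by step processes in time; each takes countably many values of \<open>W t\<close>.\<close>
  fix i :: nat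
  show "(\<lambda>p. W (max 0 (real_of_int \<lfloor>real (Suc i) * snd p\<rfloor> / real (Suc i))) (fst p))
    \<in> borel_measurable (M \<Otimes>\<^sub>M lborel)"
  proof (rule measurable_compose_countable'[where I=UNIV
        and f="\<lambda>k p. W (max 0 (real_of_int k / real (Suc i))) (fst p)" and g="\<lambda>p. \<lfloor>real (Suc i) * snd p\<rfloor>"])
    show "(\<lambda>p. W (max 0 (real_of_int k / real (Suc i))) (fst p)) \<in> borel_measurable (M \<Otimes>\<^sub>M lborel)" for k
      by (rule measurable_compose[OF measurable_fst W_meas])
    show "(\<lambda>p. \<lfloor>real (Suc i) * snd p\<rfloor>) \<in> measurable (M \<Otimes>\<^sub>M lborel) (count_space UNIV)"
      by measurable
  qed simp
next
  fix p :: "'a \<times> real" assume "p \<in> space (M \<Otimes>\<^sub>M lborel)"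
  then obtain \<omega> s where p: "p = (\<omega>, s)" and \<omega>: "\<omega> \<in> space M"
    by (cases p) (simp add: space_pair_measure)
  define t where "t i = real_of_int \<lfloor>real (Suc i) * s\<rfloor> / real (Suc i)" for i
  have "t \<longlonglongrightarrow> s"
  proof (rule tendsto_sandwich[where f="\<lambda>i. s - inverse (real (Suc i))" and h="\<lambda>i. s"])
    show "\<forall>\<^sub>F i in sequentially. s - inverse (real (Suc i)) \<le> t i"
    proof (intro always_eventually allI)
      fix i :: nat
      have "real (Suc i) * s - 1 \<le> real_of_int \<lfloor>real (Suc i) * s\<rfloor>" by linarith
      then have "(real (Suc i) * s - 1) / real (Suc i) \<le> t i"
        unfolding t_def by (intro divide_right_mono) auto
      then show "s - inverse (real (Suc i)) \<le> t i" by (simp add: field_simps)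
    qed
    show "\<forall>\<^sub>F i in sequentially. t i \<le> s"
    proof (intro always_eventually allI)
      fix i :: nat
      have "real_of_int \<lfloor>real (Suc i) * s\<rfloor> \<le> real (Suc i) * s" by linarith
      then show "t i \<le> s" unfolding t_def by (simp add: divide_le_eq mult.commute)
    qed
    show "(\<lambda>i. s - inverse (real (Suc i))) \<longlonglongrightarrow> s"
      using tendsto_diff[OF tendsto_const LIMSEQ_inverse_real_of_nat, of s] by simp
  qed simp
  have "(\<lambda>i. W (max 0 (t i)) \<omega>) \<longlonglongrightarrow> W (max 0 s) \<omega>"
    by (rule continuous_on_tendsto_compose[OF W_cont[OF \<omega>] tendsto_max[OF tendsto_const \<open>t \<longlonglongrightarrow> s\<close>]]) auto
  then show "(\<lambda>i. W (max 0 (real_of_int \<lfloor>real (Suc i) * snd p\<rfloor> / real (Suc i))) (fst p))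
      \<longlonglongrightarrow> W (max 0 (snd p)) (fst p)"
    by (simp add: p t_def)
qed

lemma nn_integral_psi_ext_path_le:
  fixes p :: "real \<Rightarrow> real^3"
  assumes [measurable]: "p \<in> borel_measurable lborel" and "0 < \<theta>"
  shows "(\<integral>\<^sup>+x. psi_ext (ennreal \<theta> * (\<integral>\<^sup>+s\<in>{0..1}. inverse (ennreal ((norm (x + p s))\<^sup>2)) \<partial>lborel)) \<partial>lborel)
    \<le> ennreal (8/3 * pi powr (3/2) * \<theta> powr (3/2))"
    (is "_ \<le> ?K")
proof -
  define h where "h x s = psi_ext (ennreal \<theta> * inverse (ennreal ((norm (x + p s))\<^sup>2)))" for x s
  have "(\<integral>\<^sup>+x. psi_ext (ennreal \<theta> * (\<integral>\<^sup>+s\<in>{0..1}. inverse (ennreal ((norm (x + p s))\<^sup>2)) \<partial>lborel)) \<partial>lborel)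
      \<le> (\<integral>\<^sup>+x. (\<integral>\<^sup>+s. h x s * indicator {0..1} s \<partial>lborel) \<partial>lborel)"
  proof (intro nn_integral_mono)
    fix x
    have "ennreal \<theta> * (\<integral>\<^sup>+s\<in>{0..1}. inverse (ennreal ((norm (x + p s))\<^sup>2)) \<partial>lborel)
        = (\<integral>\<^sup>+s. ennreal \<theta> * inverse (ennreal ((norm (x + p s))\<^sup>2)) * indicator {0..1} s \<partial>lborel)"
      by (simp add: nn_integral_cmult[symmetric] mult.assoc)
    also have "psi_ext \<dots> \<le> (\<integral>\<^sup>+s. h x s * indicator {0..1} s \<partial>lborel)"
      unfolding h_def by (rule psi_ext_nn_integral_unit_interval_le) measurable
    finally show "psi_ext (ennreal \<theta> * (\<integral>\<^sup>+s\<in>{0..1}. inverse (ennreal ((norm (x + p s))\<^sup>2)) \<partial>lborel))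
        \<le> (\<integral>\<^sup>+s. h x s * indicator {0..1} s \<partial>lborel)" .
  qed
  also have "\<dots> = (\<integral>\<^sup>+s. (\<integral>\<^sup>+x. h x s \<partial>lborel) * indicator {0..1} s \<partial>lborel)"
    by (subst lborel_pair.Fubini') (simp_all add: h_def nn_integral_multc)
  also have "\<dots> = (\<integral>\<^sup>+s. ?K * indicator {0..1::real} s \<partial>lborel)"
  proof -
    define f where "f y = psi_ext (ennreal \<theta> * inverse (ennreal ((norm y)\<^sup>2)))" for y :: "real^3"
    have "f \<in> borel_measurable borel"
      unfolding f_def[abs_def] by measurable
    from nn_integral_lborel_add_right[OF this] have "(\<integral>\<^sup>+x. h x s \<partial>lborel) = ?K" for s
      using nn_integral_psi_ext_inverse_norm_sq[OF \<open>0 < \<theta>\<close>] by (simp add: h_def f_def)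
    then show ?thesis by simp
  qed
  also have "\<dots> = ?K"
    by (simp add: nn_integral_cmult_indicator)
  finally show ?thesis .
qed

lemma (in prob_space) nn_integral_psi_ext_process_le:
  fixes V :: "'a \<Rightarrow> real \<Rightarrow> real^3"
  assumes V_meas: "(\<lambda>p. V (fst p) (snd p)) \<in> borel_measurable (M \<Otimes>\<^sub>M lborel)" and "0 < \<theta>"
  shows "(\<integral>\<^sup>+x. (\<integral>\<^sup>+\<omega>. psi_ext (ennreal \<theta> *
            (\<integral>\<^sup>+s\<in>{0..1}. inverse (ennreal ((norm (x + V \<omega> s))\<^sup>2)) \<partial>lborel)) \<partial>M) \<partial>lborel)
    \<le> ennreal (8/3 * pi powr (3/2) * \<theta> powr (3/2))"
    (is "(\<integral>\<^sup>+x. (\<integral>\<^sup>+\<omega>. ?F x \<omega> \<partial>M) \<partial>lborel) \<le> ?K")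
proof -
  from measurable_compose[OF _ V_meas, of "\<lambda>q. (fst (fst q), snd q)" "(M \<Otimes>\<^sub>M lborel) \<Otimes>\<^sub>M lborel"]
  have [measurable]: "(\<lambda>q. V (fst (fst q)) (snd q)) \<in> borel_measurable ((M \<Otimes>\<^sub>M lborel) \<Otimes>\<^sub>M lborel)"
    by simp
  have "pair_sigma_finite M lborel"
    by (simp add: pair_sigma_finite_def lborel.sigma_finite_measure_axioms sigma_finite_measure_axioms)
  then have "(\<integral>\<^sup>+x. (\<integral>\<^sup>+\<omega>. ?F x \<omega> \<partial>M) \<partial>lborel) = (\<integral>\<^sup>+\<omega>. (\<integral>\<^sup>+x. ?F x \<omega> \<partial>lborel) \<partial>M)"
    by (rule pair_sigma_finite.Fubini') measurable
  also have "\<dots> \<le> (\<integral>\<^sup>+\<omega>. ?K \<partial>M)"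
    using assms(2) measurable_Pair2[OF V_meas]
    by (intro nn_integral_mono nn_integral_psi_ext_path_le) auto
  also have "\<dots> = ?K"
    by (simp add: emeasure_space_1)
  finally show ?thesis .
qed

theorem lemma4p1:
  fixes M :: "'a measure" and W :: "real \<Rightarrow> 'a \<Rightarrow> real^3" and \<theta> \<sigma> :: real
  assumes "std_BM3 M W" and "\<theta> > 0" and "\<sigma> > 0"
  shows "(\<integral>\<^sup>+ x. (\<integral>\<^sup>+ \<omega>. psi_ext (ennreal \<theta> *
            (\<integral>\<^sup>+ s\<in>{0..1}. inverse (ennreal ((norm (x + \<sigma> *\<^sub>R W s \<omega>))\<^sup>2)) \<partial>lborel)) \<partial>M) \<partial>lborel)
         \<le> ennreal (8 / 3 * pi powr (3/2) * \<theta> powr (3/2))"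
proof -
  interpret prob_space M
    using assms(1) by (simp add: std_BM3_def)
  text \<open>Freezing the path for negative times does not change it on \<open>[0,1]\<close> but makes it jointly measurable.\<close>
  define V where "V \<omega> s = \<sigma> *\<^sub>R W (max 0 s) \<omega>" for \<omega> s
  have "(\<lambda>p. V (fst p) (snd p)) \<in> borel_measurable (M \<Otimes>\<^sub>M lborel)"
    using assms(1) unfolding V_def std_BM3_def
    by (intro borel_measurable_scaleR borel_measurable_const borel_measurable_continuous_process) auto
  moreover have "(\<integral>\<^sup>+s\<in>{0..1}. inverse (ennreal ((norm (x + \<sigma> *\<^sub>R W s \<omega>))\<^sup>2)) \<partial>lborel)
      = (\<integral>\<^sup>+s\<in>{0..1}. inverse (ennreal ((norm (x + V \<omega> s))\<^sup>2)) \<partial>lborel)" for x \<omega>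
    unfolding V_def by (intro nn_integral_cong) (simp split: split_indicator)
  ultimately show ?thesis
    using nn_integral_psi_ext_process_le[OF _ assms(2)] by simp
qed

end
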